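(* For $n\ge 2$ and $g\ge1$ let $\mathcal M^{\mathrm o}_g(n)$ be the number of MAB pairs $(u,v)$ of binary words with $|u|=|v|=n$ and $\mathrm{lsb}(u,v)+\mathrm{lsb}(v,u)-n=g$. Then $$\mathcal M^{\mathrm o}_1(n)=2\sum_{i=2}^{n-1}\sum_{l_1=1}^{n-i}\sum_{m=l_1+1}^{i+l_1-1}\frac{1}{(i-1)(n-i)}\binom{n-i}{l_1}\binom{n-i}{l_1-1}\binom{i-1}{m-l_1}\binom{i-1}{m-l_1-1},$$ and $$\mathcal M^{\mathrm o}_2(n)=2\sum_{i=3}^{n-2}\sum_{l_1=2}^{n-i}\sum_{m=l_1+2}^{i+l_1-2}\frac{4}{(i-2)(n-i)}\binom{n-i}{l_1}\binom{n-i}{l_1-2}\binom{i-2}{m-l_1}\binom{i-2}{m-l_1-2}$$ (empty sums are $0$).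
   Context: Let $\Sigma=\{a,b\}$. For a word $w$ and a letter $c$, $|w|_c$ denotes the number of occurrences of $c$ in $w$. Two words $x,y$ are abelian equivalent, written $x\sim_{\mathrm{abl}}y$, if $|x|_c=|y|_c$ for all $c\in\Sigma$. For words $u,v$: a pair $(x,y)$ is an internal abelian-border of $(u,v)$ if $x$ is a nonempty proper suffix of $u$, $y$ is a proper prefix of $v$, and $x\sim_{\mathrm{abl}}y$; it is an external abelian-border of $(u,v)$ if $x$ is a nonempty proper prefix of $u$, $y$ is a proper suffix of $v$, and $x\sim_{\mathrm{abl}}y$. The pair $(u,v)$ is mutually abelian-bordered (MAB) if it has both an internal and an external abelian-border, and mutually abelian-unbordered (MAU) if it has neither. If $(u,v)$ has an internal abelian-border, $\mathrm{sb}(u,v)$ denotes its internal abelian-border $(x,y)$ of minimal length and $\mathrm{lsb}(u,v)=|x|$ is that minimal length. Binomial coefficients $\binom{N}{r}$ are $0$ when $r<0$ or $r>N$. *)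

theory Defs
  imports Complex_Main "HOL-Library.Sublist"
begin

datatype letter = La | Lb

type_synonym word = "letter list"

definition abel_equiv :: "word \<Rightarrow> word \<Rightarrow> bool" where
  "abel_equiv x y \<longleftrightarrow> (\<forall>c. count_list x c = count_list y c)"

definition int_aborder :: "word \<Rightarrow> word \<Rightarrow> word \<Rightarrow> word \<Rightarrow> bool" where
  "int_aborder u v x y \<longleftrightarrow> x \<noteq> [] \<and> strict_suffix x u \<and> strict_prefix y v \<and> abel_equiv x y"

definition ext_aborder :: "word \<Rightarrow> word \<Rightarrow> word \<Rightarrow> word \<Rightarrow> bool" where
  "ext_aborder u v x y \<longleftrightarrow> x \<noteq> [] \<and> strict_prefix x u \<and> strict_suffix y v \<and> abel_equiv x y"

definition MAB :: "word \<Rightarrow> word \<Rightarrow> bool" where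
  "MAB u v \<longleftrightarrow> (\<exists>x y. int_aborder u v x y) \<and> (\<exists>x y. ext_aborder u v x y)"

definition lsb :: "word \<Rightarrow> word \<Rightarrow> nat" where
  "lsb u v = (LEAST k. \<exists>x y. int_aborder u v x y \<and> length x = k)"

definition Mo :: "nat \<Rightarrow> nat \<Rightarrow> nat" where
  "Mo g n = card {(u, v). length u = n \<and> length v = n \<and> MAB u v \<and>
                int (lsb u v) + int (lsb v u) - int n = int g}"

end

theory Submission
  imports Defs
begin

text \<open>Read the letters of \<open>u\<close> backwards and those of \<open>v\<close> forwards, alternately, as the
  steps of a walk: an \<open>a\<close> of \<open>u\<close> goes up and an \<open>a\<close> of \<open>v\<close> goes down. This is a bijection
  from pairs of words of length \<open>n\<close> onto walks of length \<open>2 n\<close>, under which an internal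
  abelian border of length \<open>k\<close> becomes a return to level 0 at time \<open>2 k\<close> and an external one
  a visit to the final level \<open>c\<close> at time \<open>2 (n - k)\<close>. So \<open>lsb(u,v)\<close> is the first return to 0,
  \<open>n - lsb(v,u)\<close> the last visit to \<open>c\<close> before the end, and the gap condition puts them \<open>g\<close>
  apart. As the level has the parity of the time, the walk stays positive (up to a global sign
  flip) before the first return and below \<open>c\<close> after the last visit; for \<open>g \<le> 2\<close> this forces
  \<open>c = 2 g\<close> and \<open>2 g\<close> down steps in between. The walk thus splits into a positive walk from 0
  to \<open>2 g\<close>, a straight descent, and a walk from 0 to \<open>2 g\<close> staying below \<open>2 g\<close>, which
  reversed is again positive. Positive walks of length \<open>2 k\<close> from 0 to \<open>2 g\<close> are counted by the
  ballot number \<open>g / k * C(2 k, k + g)\<close> (reflection principle), and Vandermonde's identity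
  collapses the inner double sums of the formula to products of the same binomials.\<close>

section \<open>Walks\<close>

definition step :: "bool \<Rightarrow> int" where
  "step b = (if b then 1 else -1)"

definition height :: "bool list \<Rightarrow> int" where
  "height w = (\<Sum>b\<leftarrow>w. step b)"

definition level :: "bool list \<Rightarrow> nat \<Rightarrow> int" where
  "level w t = height (take t w)"

lemma finite_walks_length: "finite {w :: bool list. length w = N}"
  using finite_lists_length_eq[of "UNIV :: bool set" N] by simp

lemma height_Nil [simp]: "height [] = 0"
  by (simp add: height_def)

lemma height_Cons [simp]: "height (b # w) = step b + height w"
  by (simp add: height_def)

lemma height_append [simp]: "height (v @ w) = height v + height w"
  by (simp add: height_def)

lemma height_rev [simp]: "height (rev w) = height w"
  by (induction w) auto

lemma height_map_Not [simp]: "height (map Not w) = - height w"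
  by (induction w) (auto simp: step_def)

lemma height_replicate_False [simp]: "height (replicate m False) = - int m"
  by (induction m) (auto simp: step_def)

lemma height_ge_neg_length: "- int (length w) \<le> height w"
  by (induction w) (auto simp: step_def)

lemma height_eq_neg_length_iff: "height w = - int (length w) \<longleftrightarrow> w = replicate (length w) False"
proof (induction w)
  case (Cons b w)
  then show ?case
    using height_ge_neg_length[of w] by (cases b) (auto simp: step_def)
qed simp

lemma even_height_plus_length: "even (height w + int (length w))"
  by (induction w) (auto simp: step_def)

lemma level_0 [simp]: "level w 0 = 0"
  by (simp add: level_def)

lemma level_Suc: "t < length w \<Longrightarrow> level w (Suc t) = level w t + step (w ! t)"
  by (simp add: level_def take_Suc_conv_app_nth)

lemma level_length: "length w \<le> t \<Longrightarrow> level w t = height w"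
  by (simp add: level_def)

lemma level_take: "t \<le> T \<Longrightarrow> level (take T w) t = level w t"
  by (simp add: level_def min_def)

lemma level_drop: "T \<le> length w \<Longrightarrow> level (drop T w) t = level w (T + t) - level w T"
  by (simp add: level_def take_add)

lemma level_append_le: "t \<le> length v \<Longrightarrow> level (v @ w) t = level v t"
  by (simp add: level_def)

lemma level_append_ge: "length v \<le> t \<Longrightarrow> level (v @ w) t = height v + level w (t - length v)"
  by (simp add: level_def)

lemma level_map_Not [simp]: "level (map Not w) t = - level w t"
  by (simp add: level_def take_map)

lemma level_rev: "t \<le> length w \<Longrightarrow> level (rev w) t = height w - level w (length w - t)"
  using height_append[of "take (length w - t) w" "drop (length w - t) w"]
  by (simp add: level_def take_rev)

lemma even_level_plus_time: "t \<le> length w \<Longrightarrow> even (level w t + int t)"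
  using even_height_plus_length[of "take t w"] by (simp add: level_def min_def)

lemma level_one_side:
  assumes "T \<le> length w" "\<forall>t\<in>{T0..T}. level w t \<noteq> c"
  shows "(\<forall>t\<in>{T0..T}. c < level w t) \<or> (\<forall>t\<in>{T0..T}. level w t < c)"
  using assms
proof (induction T)
  case (Suc T)
  show ?case
  proof (cases "T0 \<le> T")
    case True
    have "level w T \<noteq> c" "level w (Suc T) \<noteq> c"
      using Suc.prems True by auto
    moreover have "level w (Suc T) = level w T + step (w ! T)"
      using Suc.prems by (simp add: level_Suc)
    ultimately have "c < level w T \<longleftrightarrow> c < level w (Suc T)"
      by (auto simp: step_def)
    moreover have "{T0..Suc T} = insert (Suc T) {T0..T}" "T \<in> {T0..T}"
      using True by auto
    moreover have "(\<forall>t\<in>{T0..T}. c < level w t) \<or> (\<forall>t\<in>{T0..T}. level w t < c)"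
      using Suc by auto
    ultimately show ?thesis
      using \<open>level w (Suc T) \<noteq> c\<close> by (metis insert_iff not_less_iff_gr_or_eq)
  qed (use Suc.prems in \<open>auto simp: le_Suc_eq\<close>)
qed (auto simp: le_Suc_eq)

lemma level_one_side_even:
  assumes "T \<le> length w" "even c" "\<And>j. T0 \<le> 2 * j \<Longrightarrow> 2 * j \<le> T \<Longrightarrow> level w (2 * j) \<noteq> c"
  shows "(\<forall>t\<in>{T0..T}. c < level w t) \<or> (\<forall>t\<in>{T0..T}. level w t < c)"
proof (rule level_one_side)
  show "\<forall>t\<in>{T0..T}. level w t \<noteq> c"
  proof
    fix t assume t: "t \<in> {T0..T}"
    show "level w t \<noteq> c"
    proof (cases "even t")
      case True
      then show ?thesis using t assms(3) by (auto elim!: evenE)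
    next
      case False
      then show ?thesis using even_level_plus_time[of t w] t assms(1,2) by auto
    qed
  qed
qed (use assms in auto)

section \<open>Abelian borders as features of a walk\<close>

lemma abel_equiv_iff_count_La:
  "abel_equiv x y \<longleftrightarrow> length x = length y \<and> count_list x La = count_list y La"
proof -
  have length_count: "length z = count_list z La + count_list z Lb" for z
  proof (induction z)
    case (Cons c z)
    then show ?case by (cases c) auto
  qed simp
  have "(\<forall>c. count_list x c = count_list y c) \<longleftrightarrow>
      count_list x La = count_list y La \<and> count_list x Lb = count_list y Lb"
    by (metis letter.exhaust)
  then show ?thesis
    unfolding abel_equiv_def using length_count[of x] length_count[of y] by auto
qed

lemma ext_aborder_iff_int_aborder: "ext_aborder u v x y \<longleftrightarrow> int_aborder v u y x"
  unfolding ext_aborder_def int_aborder_def abel_equiv_iff_count_La by auto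

lemma int_aborder_length_iff:
  assumes "length u = n" "length v = n"
  shows "(\<exists>x y. int_aborder u v x y \<and> length x = k) \<longleftrightarrow>
    1 \<le> k \<and> k < n \<and> count_list (drop (n - k) u) La = count_list (take k v) La"
proof
  assume "\<exists>x y. int_aborder u v x y \<and> length x = k"
  then obtain x y where "x \<noteq> []" "strict_suffix x u" "strict_prefix y v" "abel_equiv x y"
    and "length x = k"
    unfolding int_aborder_def by blast
  moreover have "length y = k"
    using \<open>abel_equiv x y\<close> \<open>length x = k\<close> by (simp add: abel_equiv_iff_count_La)
  ultimately have "x = drop (n - k) u" "y = take k v" "k < n" "1 \<le> k"
    using assms suffix_length_less[of x u] length_greater_0_conv[of x]
    by (auto simp: strict_suffix_def suffix_def strict_prefix_def prefix_def)
  then show "1 \<le> k \<and> k < n \<and> count_list (drop (n - k) u) La = count_list (take k v) La"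
    using \<open>abel_equiv x y\<close> by (simp add: abel_equiv_iff_count_La)
next
  assume k: "1 \<le> k \<and> k < n \<and> count_list (drop (n - k) u) La = count_list (take k v) La"
  then have "int_aborder u v (drop (n - k) u) (take k v)"
    using assms by (auto simp: int_aborder_def abel_equiv_iff_count_La strict_suffix_def
        strict_prefix_def suffix_drop take_is_prefix dest: arg_cong[of _ _ length])
  then show "\<exists>x y. int_aborder u v x y \<and> length x = k"
    using assms k by fastforce
qed

definition pair_steps :: "(letter \<times> letter) list \<Rightarrow> bool list" where
  "pair_steps ps = concat (map (\<lambda>(x, y). [x = La, y = Lb]) ps)"

definition border_walk :: "word \<Rightarrow> word \<Rightarrow> bool list" where
  "border_walk u v = pair_steps (zip (rev u) v)"

lemma pair_steps_Nil [simp]: "pair_steps [] = []"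
  by (simp add: pair_steps_def)

lemma pair_steps_Cons [simp]: "pair_steps ((x, y) # ps) = (x = La) # (y = Lb) # pair_steps ps"
  by (simp add: pair_steps_def)

lemma length_pair_steps [simp]: "length (pair_steps ps) = 2 * length ps"
  by (induction ps) auto

lemma take_pair_steps: "take (2 * k) (pair_steps ps) = pair_steps (take k ps)"
proof (induction ps arbitrary: k)
  case (Cons p ps)
  then show ?case by (cases p; cases k) auto
qed simp

lemma height_pair_steps:
  "height (pair_steps ps) = 2 * (int (count_list (map fst ps) La) - int (count_list (map snd ps) La))"
proof (induction ps)
  case (Cons p ps)
  then show ?case by (cases p; cases "fst p"; cases "snd p") (auto simp: step_def)
qed simp

lemma inj_pair_steps: "inj pair_steps"
proof (rule injI)
  fix ps qs :: "(letter \<times> letter) list"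
  assume "pair_steps ps = pair_steps qs"
  then show "ps = qs"
  proof (induction ps arbitrary: qs)
    case Nil
    then show ?case by (cases qs) auto
  next
    case (Cons p ps)
    then obtain q qs' where "qs = q # qs'"
      by (cases p; cases qs) auto
    with Cons show ?case
      by (cases p; cases q; cases "fst p"; cases "fst q"; cases "snd p"; cases "snd q") auto
  qed
qed

lemma pair_steps_surj: "length w = 2 * n \<Longrightarrow> \<exists>ps. length ps = n \<and> w = pair_steps ps"
proof (induction n arbitrary: w)
  case (Suc n)
  then obtain b b' w' where w: "w = b # b' # w'" and "length w' = 2 * n"
    by (metis Suc_length_conv mult_Suc_right numeral_2_eq_2 add_2_eq_Suc)
  then obtain ps where "length ps = n" "w' = pair_steps ps"
    using Suc.IH by blast
  then have "w = pair_steps ((if b then La else Lb, if b' then Lb else La) # ps)"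
    using w by simp
  then show ?case
    using \<open>length ps = n\<close> by (metis length_Cons)
qed simp

lemma level_border_walk:
  assumes "length u = n" "length v = n" "k \<le> n"
  shows "level (border_walk u v) (2 * k) =
    2 * (int (count_list (drop (n - k) u) La) - int (count_list (take k v) La))"
proof -
  have "take k (zip (rev u) v) = zip (rev (drop (n - k) u)) (take k v)"
    using assms by (simp add: take_zip take_rev)
  then show ?thesis
    using assms by (simp add: level_def border_walk_def take_pair_steps height_pair_steps)
qed

lemma level_border_walk_length:
  assumes "length u = n" "length v = n"
  shows "level (border_walk u v) (2 * n) = 2 * (int (count_list u La) - int (count_list v La))"
  using level_border_walk[OF assms order_refl] assms by simp

definition walk_int_border :: "nat \<Rightarrow> bool list \<Rightarrow> nat \<Rightarrow> bool" where
  "walk_int_border n w k \<longleftrightarrow> 1 \<le> k \<and> k < n \<and> level w (2 * k) = 0"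

definition walk_ext_border :: "nat \<Rightarrow> bool list \<Rightarrow> nat \<Rightarrow> bool" where
  "walk_ext_border n w k \<longleftrightarrow> 1 \<le> k \<and> k < n \<and> level w (2 * (n - k)) = level w (2 * n)"

definition mab_walk :: "nat \<Rightarrow> nat \<Rightarrow> bool list \<Rightarrow> bool" where
  "mab_walk g n w \<longleftrightarrow> Ex (walk_int_border n w) \<and> Ex (walk_ext_border n w) \<and>
     Least (walk_int_border n w) + Least (walk_ext_border n w) = n + g"

lemma int_aborder_iff_walk_int_border:
  assumes "length u = n" "length v = n"
  shows "(\<exists>x y. int_aborder u v x y \<and> length x = k) \<longleftrightarrow> walk_int_border n (border_walk u v) k"
  unfolding int_aborder_length_iff[OF assms] walk_int_border_def
  using assms level_border_walk[OF assms, of k] by auto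

lemma int_aborder_swap_iff_walk_ext_border:
  assumes "length u = n" "length v = n"
  shows "(\<exists>x y. int_aborder v u x y \<and> length x = k) \<longleftrightarrow> walk_ext_border n (border_walk u v) k"
proof (cases "1 \<le> k \<and> k < n")
  case True
  have split: "int (count_list w La) = int (count_list (take j w) La) + int (count_list (drop j w) La)"
    for w :: word and j
    by (metis append_take_drop_id count_list_append of_nat_add)
  have "level (border_walk u v) (2 * (n - k)) =
      2 * (int (count_list (drop k u) La) - int (count_list (take (n - k) v) La))"
    using True level_border_walk[OF assms, of "n - k"] by simp
  then show ?thesis
    unfolding int_aborder_length_iff[OF assms(2,1)] walk_ext_border_def
    using True split[of u k] split[of v "n - k"] level_border_walk_length[OF assms] by auto
next
  case False
  then show ?thesis
    unfolding int_aborder_length_iff[OF assms(2,1)] walk_ext_border_def by auto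
qed

lemma MAB_lsb_iff_mab_walk:
  assumes "length u = n" "length v = n"
  shows "MAB u v \<and> int (lsb u v) + int (lsb v u) - int n = int g \<longleftrightarrow> mab_walk g n (border_walk u v)"
proof -
  have int: "(\<exists>x y. int_aborder u v x y) \<longleftrightarrow> Ex (walk_int_border n (border_walk u v))"
    "lsb u v = Least (walk_int_border n (border_walk u v))"
    unfolding lsb_def int_aborder_iff_walk_int_border[OF assms, symmetric] by blast+
  have ext: "(\<exists>x y. ext_aborder u v x y) \<longleftrightarrow> Ex (walk_ext_border n (border_walk u v))"
    "lsb v u = Least (walk_ext_border n (border_walk u v))"
    unfolding lsb_def ext_aborder_iff_int_aborder int_aborder_swap_iff_walk_ext_border[OF assms, symmetric]
    by blast+
  show ?thesis
    unfolding MAB_def mab_walk_def int ext by auto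
qed

lemma bij_betw_border_walk:
  "bij_betw (\<lambda>(u, v). border_walk u v) {(u, v). length u = n \<and> length v = n} {w. length w = 2 * n}"
proof (rule bij_betw_imageI)
  show "inj_on (\<lambda>(u, v). border_walk u v) {(u, v). length u = n \<and> length v = n}"
  proof (rule inj_onI)
    fix p p' assume "p \<in> {(u, v). length u = n \<and> length v = n}"
      "p' \<in> {(u, v). length u = n \<and> length v = n}"
      "(\<lambda>(u, v). border_walk u v) p = (\<lambda>(u, v). border_walk u v) p'"
    then obtain u v u' v' where p: "p = (u, v)" "p' = (u', v')"
      and "length u = n" "length v = n" "length u' = n" "length v' = n"
      and "border_walk u v = border_walk u' v'"
      by auto
    then have "zip (rev u) v = zip (rev u') v'"
      using inj_pair_steps by (simp add: border_walk_def inj_eq)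
    then have "map fst (zip (rev u) v) = map fst (zip (rev u') v')"
      "map snd (zip (rev u) v) = map snd (zip (rev u') v')"
      by simp_all
    then show "p = p'"
      using p \<open>length u = n\<close> \<open>length v = n\<close> \<open>length u' = n\<close> \<open>length v' = n\<close> by simp
  qed
  show "(\<lambda>(u, v). border_walk u v) ` {(u, v). length u = n \<and> length v = n} = {w. length w = 2 * n}"
  proof (intro equalityI subsetI)
    fix w :: "bool list"
    assume "w \<in> {w. length w = 2 * n}"
    then obtain ps where "length ps = n" "w = pair_steps ps"
      using pair_steps_surj by blast
    then have "w = border_walk (rev (map fst ps)) (map snd ps)"
      by (simp add: border_walk_def zip_map_fst_snd)
    then show "w \<in> (\<lambda>(u, v). border_walk u v) ` {(u, v). length u = n \<and> length v = n}"
      using \<open>length ps = n\<close> by force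
  qed (auto simp: border_walk_def)
qed

lemma Mo_eq_card_mab_walks: "Mo g n = card {w. length w = 2 * n \<and> mab_walk g n w}"
proof -
  let ?P = "\<lambda>(u, v). MAB u v \<and> int (lsb u v) + int (lsb v u) - int n = int g"
  have "Mo g n = card {p \<in> {(u, v). length u = n \<and> length v = n}. ?P p}"
    unfolding Mo_def by (rule arg_cong[where f = card]) auto
  also have "\<dots> = card {w \<in> {w. length w = 2 * n}. mab_walk g n w}"
  proof (rule bij_betw_same_card, rule bij_betw_Collect[OF bij_betw_border_walk])
    fix p :: "word \<times> word"
    assume "p \<in> {(u, v). length u = n \<and> length v = n}"
    then obtain u v where "p = (u, v)" "length u = n" "length v = n"
      by blast
    then show "mab_walk g n ((\<lambda>(u, v). border_walk u v) p) \<longleftrightarrow> ?P p"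
      using MAB_lsb_iff_mab_walk[of u n v g] by simp
  qed
  finally show ?thesis
    by simp
qed

lemma mab_walk_map_Not [simp]: "mab_walk g n (map Not w) \<longleftrightarrow> mab_walk g n w"
proof -
  have "walk_int_border n (map Not w) = walk_int_border n w"
    "walk_ext_border n (map Not w) = walk_ext_border n w"
    by (auto simp: fun_eq_iff walk_int_border_def walk_ext_border_def)
  then show ?thesis
    by (simp add: mab_walk_def)
qed

lemma card_mab_walks_eq_twice_up:
  assumes "1 \<le> n"
  shows "card {w. length w = 2 * n \<and> mab_walk g n w} =
    2 * card {w. length w = 2 * n \<and> mab_walk g n w \<and> 0 < level w 1}"
proof -
  define U where "U = {w. length w = 2 * n \<and> mab_walk g n w \<and> 0 < level w 1}"
  have first_step: "level w 1 = step (w ! 0)" if "length w = 2 * n" for w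
    using level_Suc[of 0 w] that assms by simp
  have "{w. length w = 2 * n \<and> mab_walk g n w} = U \<union> map Not ` U"
  proof (intro equalityI subsetI)
    fix w assume w: "w \<in> {w. length w = 2 * n \<and> mab_walk g n w}"
    show "w \<in> U \<union> map Not ` U"
    proof (cases "0 < level w 1")
      case False
      then have "map Not w \<in> U"
        using w first_step[of w] by (simp add: U_def step_def split: if_splits)
      moreover have "w = map Not (map Not w)"
        by (simp add: comp_def)
      ultimately show ?thesis
        by blast
    qed (use w U_def in auto)
  qed (auto simp: U_def)
  moreover have "finite U"
    by (rule finite_subset[OF _ finite_walks_length]) (auto simp: U_def)
  moreover have "U \<inter> map Not ` U = {}" "inj_on (map Not) U"
    by (auto simp: U_def inj_on_def)
  ultimately show ?thesis
    unfolding U_def[symmetric] by (simp add: card_Un_disjoint card_image)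
qed

section \<open>Counting positive walks\<close>

definition pos_walks :: "nat \<Rightarrow> int \<Rightarrow> int \<Rightarrow> bool list set" where
  "pos_walks N s h = {w. length w = N \<and> (\<forall>t\<in>{1..N}. 0 < s + level w t) \<and> s + height w = h}"

definition below_walks :: "nat \<Rightarrow> int \<Rightarrow> bool list set" where
  "below_walks N c = {w. length w = N \<and> (\<forall>t<N. level w t < c) \<and> height w = c}"

lemma finite_pos_walks: "finite (pos_walks N s h)"
  by (rule finite_subset[OF _ finite_walks_length[of N]]) (auto simp: pos_walks_def)

lemma pos_walks_0: "pos_walks 0 s h = (if s = h then {[]} else {})"
  by (auto simp: pos_walks_def)

lemma Cons_in_pos_walks:
  "b # w \<in> pos_walks (Suc N) s h \<longleftrightarrow> 0 < s + step b \<and> w \<in> pos_walks N (s + step b) h"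
proof -
  have "{1..Suc N} = insert 1 (Suc ` {1..N})"
    by (auto simp: atLeastAtMost_insertL)
  then have "(\<forall>t\<in>{1..Suc N}. 0 < s + level (b # w) t) \<longleftrightarrow>
      0 < s + step b \<and> (\<forall>t\<in>{1..N}. 0 < s + step b + level w t)"
    by (simp add: level_def add.assoc del: image_Suc_atLeastAtMost)
  then show ?thesis
    by (auto simp: pos_walks_def add.assoc)
qed

lemma card_pos_walks_Suc:
  assumes "0 \<le> s"
  shows "card (pos_walks (Suc N) s h) =
    card (pos_walks N (s + 1) h) + (if 2 \<le> s then card (pos_walks N (s - 1) h) else 0)"
proof -
  let ?down = "if 2 \<le> s then pos_walks N (s - 1) h else {}"
  have "w \<in> pos_walks (Suc N) s h \<longleftrightarrow> w \<in> Cons True ` pos_walks N (s + 1) h \<union> Cons False ` ?down"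
    for w
  proof (cases w)
    case Nil
    then show ?thesis
      by (auto simp: pos_walks_def)
  next
    case (Cons b w')
    then show ?thesis
      using assms by (cases b) (auto simp: Cons_in_pos_walks step_def)
  qed
  then have "pos_walks (Suc N) s h = Cons True ` pos_walks N (s + 1) h \<union> Cons False ` ?down"
    by blast
  also have "card \<dots> = card (pos_walks N (s + 1) h) + card ?down"
    by (subst card_Un_disjoint) (auto simp: finite_pos_walks card_image)
  finally show ?thesis
    by simp
qed

definition int_choose :: "nat \<Rightarrow> int \<Rightarrow> int" where
  "int_choose N r = (if r < 0 then 0 else int (N choose nat r))"

lemma int_choose_0: "int_choose 0 r = (if r = 0 then 1 else 0)"
  by (simp add: int_choose_def)

lemma int_choose_Suc: "int_choose (Suc N) r = int_choose N r + int_choose N (r - 1)"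
proof (cases "0 < r")
  case True
  then have "nat r = Suc (nat (r - 1))"
    by simp
  then show ?thesis
    using True by (simp add: int_choose_def)
qed (auto simp: int_choose_def)

lemma int_choose_of_nat [simp]: "int_choose N (int r) = int (N choose r)"
  by (simp add: int_choose_def)

text \<open>Reflection principle: all walks of length \<open>N\<close> from \<open>s\<close> to \<open>h\<close>, minus those from
  \<open>-s\<close> to \<open>h\<close>, which are in bijection with the walks from \<open>s\<close> to \<open>h\<close> touching 0.\<close>
definition reflection_count :: "nat \<Rightarrow> int \<Rightarrow> int \<Rightarrow> int" where
  "reflection_count N s h = (if even (int N + h - s)
     then int_choose N ((int N + h - s) div 2) - int_choose N ((int N + h + s) div 2) else 0)"

lemma reflection_count_from_0: "reflection_count N 0 h = 0"
  by (simp add: reflection_count_def)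

lemma reflection_count_Suc:
  "reflection_count (Suc N) s h = reflection_count N (s + 1) h + reflection_count N (s - 1) h"
proof (cases "even (int N + 1 + h - s)")
  case True
  then obtain q where q: "int N + 1 + h - s = 2 * q"
    by (metis evenE)
  then have "int (Suc N) + h - s = 2 * q" "int (Suc N) + h + s = 2 * (q + s)"
    "int N + h - (s + 1) = 2 * (q - 1)" "int N + h + (s + 1) = 2 * (q + s)"
    "int N + h - (s - 1) = 2 * q" "int N + h + (s - 1) = 2 * (q + s - 1)"
    by simp_all
  then show ?thesis
    unfolding reflection_count_def using int_choose_Suc[of N q] int_choose_Suc[of N "q + s"]
    by (simp only: even_mult_iff even_two_times_div_two nonzero_mult_div_cancel_left) simp
next
  case False
  then show ?thesis
    by (simp add: reflection_count_def) presburger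
qed

lemma card_pos_walks:
  "1 \<le> s \<Longrightarrow> 1 \<le> h \<Longrightarrow> int (card (pos_walks N s h)) = reflection_count N s h"
proof (induction N arbitrary: s)
  case 0
  have "(h + s) div 2 \<noteq> 0" "s = h \<or> (h - s) div 2 \<noteq> 0 \<or> odd (h - s)"
    using 0 by presburger+
  then show ?case
    using 0 by (auto simp: pos_walks_0 reflection_count_def int_choose_0)
next
  case (Suc N)
  then have "int (card (pos_walks (Suc N) s h)) = reflection_count N (s + 1) h +
      (if 2 \<le> s then reflection_count N (s - 1) h else 0)"
    by (simp add: card_pos_walks_Suc)
  also have "\<dots> = reflection_count (Suc N) s h"
    using Suc.prems reflection_count_from_0[of N h]
    by (cases "s = 1") (auto simp: reflection_count_Suc)
  finally show ?case .
qed

lemma card_pos_walks_from_0: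
  assumes "1 \<le> k" "1 \<le> g"
  shows "real (card (pos_walks (2 * k) 0 (2 * int g))) = real g * real (2 * k choose (k + g)) / real k"
proof -
  define X Y where "X = (2 * k - 1) choose (k + g - 1)" and "Y = (2 * k - 1) choose (k + g)"
  have "card (pos_walks (2 * k) 0 (2 * int g)) = card (pos_walks (2 * k - 1) 1 (2 * int g))"
    using card_pos_walks_Suc[of 0 "2 * k - 1"] assms by (simp add: Suc_diff_le)
  also have "int \<dots> = reflection_count (2 * k - 1) 1 (2 * int g)"
    using assms by (simp add: card_pos_walks)
  also have "\<dots> = int_choose (2 * k - 1) (int (k + g - 1)) - int_choose (2 * k - 1) (int (k + g))"
  proof -
    have "int (2 * k - 1) + 2 * int g - 1 = 2 * int (k + g - 1)"
      "int (2 * k - 1) + 2 * int g + 1 = 2 * int (k + g)"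
      using assms by simp_all
    then show ?thesis
      unfolding reflection_count_def by simp
  qed
  also have "\<dots> = int X - int Y"
    by (simp only: int_choose_of_nat X_def Y_def)
  finally have card: "real (card (pos_walks (2 * k) 0 (2 * int g))) = real X - real Y"
    by (metis of_int_diff of_int_of_nat_eq)
  have "real (k + g) * real (2 * k choose (k + g)) = real (2 * k) * real X"
    using binomial_absorption[of "k + g - 1" "2 * k"] assms unfolding X_def
    by (metis Suc_diff_1 add_pos_pos less_eq_Suc_le of_nat_mult One_nat_def)
  moreover have "real (2 * k - (k + g)) * real (2 * k choose (k + g)) = real (2 * k) * real Y"
    using binomial_absorb_comp[of "2 * k" "k + g"] unfolding Y_def by (metis of_nat_mult)
  moreover have "real (2 * k - (k + g)) = real k - real g \<or> (2 * k choose (k + g) = 0 \<and> X = 0 \<and> Y = 0)"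
    unfolding X_def Y_def using assms by (cases "g \<le> k") (auto simp: binomial_eq_0)
  ultimately have "real k * (real X - real Y) = real g * real (2 * k choose (k + g))"
    by (auto simp: algebra_simps)
  then show ?thesis
    unfolding card using assms by (simp add: field_simps)
qed

lemma rev_below_walks_iff: "rev w \<in> pos_walks N 0 c \<longleftrightarrow> w \<in> below_walks N c"
proof -
  have "(\<forall>t\<in>{1..N}. 0 < level (rev w) t) \<longleftrightarrow> (\<forall>t<N. level w t < height w)" if "length w = N"
  proof -
    have "(\<forall>t\<in>{1..N}. 0 < level (rev w) t) \<longleftrightarrow> (\<forall>t\<in>{1..N}. level w (N - t) < height w)"
      using that by (simp add: level_rev)
    also have "\<dots> \<longleftrightarrow> (\<forall>t<N. level w t < height w)"
    proof (intro iffI allI ballI impI)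
      fix t assume "\<forall>t\<in>{1..N}. level w (N - t) < height w" "t < N"
      moreover have "N - t \<in> {1..N}" "N - (N - t) = t"
        using \<open>t < N\<close> by auto
      ultimately show "level w t < height w"
        by metis
    qed auto
    finally show ?thesis .
  qed
  then show ?thesis
    by (auto simp: pos_walks_def below_walks_def)
qed

lemma card_below_walks: "card (below_walks N c) = card (pos_walks N 0 c)"
  by (rule bij_betw_same_card[of rev], rule bij_betw_byWitness[where f' = rev])
    (auto simp flip: rev_below_walks_iff)

section \<open>Walks of gap 1 and 2 as glued positive walks\<close>

lemma level_append_replicate_False:
  "length v \<le> t \<Longrightarrow> t \<le> length v + m \<Longrightarrow>
     level (v @ replicate m False @ w) t = height v - int (t - length v)"
  "length v + m \<le> t \<Longrightarrow>
     level (v @ replicate m False @ w) t = height v - int m + level w (t - length v - m)"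
  by (simp_all add: level_append_ge level_append_le level_def)

definition descent_walks :: "nat \<Rightarrow> nat \<Rightarrow> nat \<Rightarrow> bool list set" where
  "descent_walks g n k = (\<lambda>(w1, w2). w1 @ replicate (2 * g) False @ w2) `
     (pos_walks (2 * k) 0 (2 * int g) \<times> below_walks (2 * (n - g - k)) (2 * int g))"

lemma card_descent_walks:
  "card (descent_walks g n k) =
     card (pos_walks (2 * k) 0 (2 * int g)) * card (pos_walks (2 * (n - g - k)) 0 (2 * int g))"
proof -
  have "inj_on (\<lambda>(w1, w2). w1 @ replicate (2 * g) False @ w2)
      (pos_walks (2 * k) 0 (2 * int g) \<times> below_walks (2 * (n - g - k)) (2 * int g))"
    by (rule inj_onI) (auto simp: pos_walks_def)
  then show ?thesis
    by (simp add: descent_walks_def card_image card_cartesian_product card_below_walks)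
qed

lemma descent_walk_profile:
  assumes "w \<in> descent_walks g n k" "k + g \<le> n"
  shows "length w = 2 * n"
    and "\<forall>t\<in>{1..2 * k}. 0 < level w t"
    and "2 * k \<le> t \<Longrightarrow> t \<le> 2 * (k + g) \<Longrightarrow> level w t = 2 * int g - int (t - 2 * k)"
    and "2 * (k + g) \<le> t \<Longrightarrow> t < 2 * n \<Longrightarrow> level w t < 2 * int g"
    and "level w (2 * n) = 2 * int g"
proof -
  obtain w1 w2 where w: "w = w1 @ replicate (2 * g) False @ w2"
    and w1: "length w1 = 2 * k" "\<forall>t\<in>{1..2 * k}. 0 < level w1 t" "height w1 = 2 * int g"
    and w2: "length w2 = 2 * (n - g - k)" "\<forall>t<2 * (n - g - k). level w2 t < 2 * int g"
      "height w2 = 2 * int g"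
    using assms(1) by (auto simp: descent_walks_def pos_walks_def below_walks_def)
  have rest: "level w t = level w2 (t - 2 * k - 2 * g)" if "2 * (k + g) \<le> t" for t
    using that w1 by (simp add: w level_append_replicate_False)
  show "length w = 2 * n"
    using w w1(1) w2(1) assms(2) by simp
  show "\<forall>t\<in>{1..2 * k}. 0 < level w t"
    using w1 by (simp add: w level_append_le)
  show "2 * k \<le> t \<Longrightarrow> t \<le> 2 * (k + g) \<Longrightarrow> level w t = 2 * int g - int (t - 2 * k)"
    using w1 by (simp add: w level_append_replicate_False)
  show "2 * (k + g) \<le> t \<Longrightarrow> t < 2 * n \<Longrightarrow> level w t < 2 * int g"
    using rest w2(2) assms(2) by simp
  show "level w (2 * n) = 2 * int g"
    using rest[of "2 * n"] assms(2) w2 by (simp add: level_length)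
qed

lemma descent_walk_mab_walk:
  assumes "1 \<le> g" "1 \<le> k" "k + g < n" and "w \<in> descent_walks g n k"
  shows "length w = 2 * n" "mab_walk g n w" "0 < level w 1" "Least (walk_int_border n w) = k + g"
proof -
  note profile = descent_walk_profile[OF assms(4) less_imp_le[OF assms(3)]]
  show "length w = 2 * n" "0 < level w 1"
    using profile(1,2) assms(2) by auto
  have int_border: "walk_int_border n w j \<longleftrightarrow> j = k + g" if "j \<le> k + g" for j
  proof (cases "j \<le> k")
    case True
    then show ?thesis
      using profile(2)[rule_format, of "2 * j"] assms by (auto simp: walk_int_border_def)
  qed (use that profile(3)[of "2 * j"] assms in \<open>auto simp: walk_int_border_def\<close>)
  show first_zero: "Least (walk_int_border n w) = k + g"
    using int_border by (intro Least_equality) (simp, metis nat_le_linear)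
  have ext_border: "walk_ext_border n w j \<longleftrightarrow> j = n - k" if "j \<le> n - k" for j
  proof (cases "n - j \<le> k + g")
    case True
    then show ?thesis
      using that profile(3)[of "2 * (n - j)"] profile(5) assms by (auto simp: walk_ext_border_def)
  qed (use that profile(4)[of "2 * (n - j)"] profile(5) in \<open>auto simp: walk_ext_border_def\<close>)
  have "Least (walk_ext_border n w) = n - k"
    using ext_border by (intro Least_equality) (simp, metis nat_le_linear)
  then show "mab_walk g n w"
    unfolding mab_walk_def using first_zero int_border[of "k + g"] ext_border[of "n - k"] assms
    by auto
qed

lemma Least_walk_int_border:
  assumes "Ex (walk_int_border n w)"
  shows "walk_int_border n w (Least (walk_int_border n w))"
    and "1 \<le> j \<Longrightarrow> j < Least (walk_int_border n w) \<Longrightarrow> level w (2 * j) \<noteq> 0"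
proof -
  show least: "walk_int_border n w (Least (walk_int_border n w))"
    using assms by (rule LeastI_ex)
  assume "1 \<le> j" "j < Least (walk_int_border n w)"
  moreover from this(2) have "\<not> walk_int_border n w j"
    by (rule not_less_Least)
  ultimately show "level w (2 * j) \<noteq> 0"
    using least by (simp add: walk_int_border_def)
qed

lemma Least_walk_ext_border:
  assumes "Ex (walk_ext_border n w)"
  shows "walk_ext_border n w (Least (walk_ext_border n w))"
    and "n - Least (walk_ext_border n w) < j \<Longrightarrow> j < n \<Longrightarrow> level w (2 * j) \<noteq> level w (2 * n)"
proof -
  show "walk_ext_border n w (Least (walk_ext_border n w))"
    using assms by (rule LeastI_ex)
  assume "n - Least (walk_ext_border n w) < j" "j < n"
  moreover from this have "\<not> walk_ext_border n w (n - j)"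
    by (intro not_less_Least) simp
  ultimately show "level w (2 * j) \<noteq> level w (2 * n)"
    by (simp add: walk_ext_border_def)
qed

lemma mab_walk_profile:
  assumes "1 \<le> g" "length w = 2 * n" "mab_walk g n w" "0 < level w 1"
  obtains b where "1 \<le> b" "b + g < n" "level w (2 * b) = level w (2 * n)"
    "level w (2 * (b + g)) = 0"
    "\<forall>t\<in>{1..2 * (b + g) - 1}. 0 < level w t"
    "\<forall>t\<in>{2 * b + 1..2 * n - 1}. level w t < level w (2 * n)"
proof -
  define a e where "a = Least (walk_int_border n w)" and "e = Least (walk_ext_border n w)"
  have "Ex (walk_int_border n w)" "Ex (walk_ext_border n w)" "a + e = n + g"
    using assms(3) by (simp_all add: mab_walk_def a_def e_def)
  note a = Least_walk_int_border[OF this(1), folded a_def]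
    and e = Least_walk_ext_border[OF this(2), folded e_def]
  define b where "b = n - e"
  have b: "1 \<le> b" "a = b + g" "level w (2 * b) = level w (2 * n)"
    using e(1) \<open>a + e = n + g\<close> by (auto simp: b_def walk_ext_border_def)
  have "(\<forall>t\<in>{1..2 * a - 1}. 0 < level w t) \<or> (\<forall>t\<in>{1..2 * a - 1}. level w t < 0)"
    using a assms(2) by (intro level_one_side_even) (auto simp: walk_int_border_def)
  moreover have "1 \<in> {1..2 * a - 1}"
    using a(1) by (auto simp: walk_int_border_def)
  ultimately have pos: "\<forall>t\<in>{1..2 * a - 1}. 0 < level w t"
    using assms(4) by force
  have "(\<forall>t\<in>{2 * b + 1..2 * n - 1}. level w (2 * n) < level w t) \<or>
      (\<forall>t\<in>{2 * b + 1..2 * n - 1}. level w t < level w (2 * n))"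
    using e(2) assms(2) even_level_plus_time[of "2 * n" w]
    by (intro level_one_side_even) (auto simp: b_def)
  moreover have "2 * a \<in> {2 * b + 1..2 * n - 1}" "level w (2 * a) = 0"
    using a(1) b assms(1) by (auto simp: walk_int_border_def)
  moreover have "0 < level w (2 * b)"
    using b assms(1) pos[rule_format, of "2 * b"] by simp
  ultimately have "\<forall>t\<in>{2 * b + 1..2 * n - 1}. level w t < level w (2 * n)"
    using b(3) by (metis order.asym)
  then show ?thesis
    using that[of b] a(1) b pos by (simp add: walk_int_border_def)
qed

text \<open>Only for \<open>g \<le> 2\<close> is a descent of \<open>2 g\<close> steps from \<open>c\<close> to \<open>0\<close> strictly inside
  \<open>(0, c)\<close> forced to be straight: for \<open>g = 3\<close> already \<open>4, 3, 2, 3, 2, 1, 0\<close> qualifies.\<close>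
lemma forced_descent:
  assumes "g = 1 \<or> g = 2" "length s = 2 * g" "even c" "c + height s = 0"
    and inside: "\<forall>t\<in>{1..2 * g - 1}. 0 < c + level s t \<and> c + level s t < c"
  shows "c = 2 * int g" "s = replicate (2 * g) False"
proof -
  have "c \<le> 2 * int g"
    using height_ge_neg_length[of s] assms(2,4) by simp
  moreover have "2 \<le> c"
    using inside[rule_format, of 1] assms(1,3) by fastforce
  moreover have "\<not> (c = 2 \<and> g = 2)"
  proof
    assume "c = 2 \<and> g = 2"
    then have "0 < 2 + level s 2 \<and> 2 + level s 2 < 2" "even (level s 2 + 2)"
      using inside[rule_format, of 2] even_level_plus_time[of 2 s] assms(2) by simp_all
    then show False
      by presburger
  qed
  ultimately show c: "c = 2 * int g"
    using assms(1,3) by presburger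
  then show "s = replicate (2 * g) False"
    using height_eq_neg_length_iff[of s] assms(2,4) by simp
qed

lemma take_in_pos_walks:
  assumes "T \<le> length w" "\<forall>t\<in>{1..T}. 0 < level w t"
  shows "take T w \<in> pos_walks T 0 (level w T)"
  using assms by (auto simp: pos_walks_def level_take level_def[symmetric])

lemma drop_in_below_walks:
  assumes "T \<le> length w" "level w T = 0" "0 < height w"
    and "\<forall>t\<in>{T + 1..length w - 1}. level w t < height w"
  shows "drop T w \<in> below_walks (length w - T) (height w)"
proof -
  have level_drop_T: "level (drop T w) t = level w (T + t)" for t
    using assms(1,2) by (simp add: level_drop)
  have "level (drop T w) t < height w" if "t < length w - T" for t
  proof (cases "t = 0")
    case False
    then have "T + t \<in> {T + 1..length w - 1}"
      using that by auto
    then show ?thesis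
      using assms(4) level_drop_T[of t] by auto
  qed (use assms(3) in simp)
  moreover have "height (drop T w) = height w"
    using level_drop_T[of "length w - T"] assms(1) by (simp add: level_length)
  ultimately show ?thesis
    by (simp add: below_walks_def)
qed

lemma up_mab_walk_in_descent_walks:
  assumes "g = 1 \<or> g = 2" "length w = 2 * n" "mab_walk g n w" "0 < level w 1"
  obtains k where "1 \<le> k" "k + g < n" "w \<in> descent_walks g n k"
proof -
  obtain b where b: "1 \<le> b" "b + g < n" "level w (2 * b) = level w (2 * n)"
    "level w (2 * (b + g)) = 0"
    and pos: "\<forall>t\<in>{1..2 * (b + g) - 1}. 0 < level w t"
    and below: "\<forall>t\<in>{2 * b + 1..2 * n - 1}. level w t < level w (2 * n)"
    using assms(1) mab_walk_profile[OF _ assms(2-4)] by (metis one_le_numeral order_refl)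
  define c where "c = level w (2 * n)"
  define s where "s = take (2 * g) (drop (2 * b) w)"
  have level_s: "c + level s t = level w (2 * b + t)" if "t \<le> 2 * g" for t
    using that b(2,3) assms(2) by (simp add: s_def c_def level_take level_drop)
  have len_s: "length s = 2 * g" and "even c"
    using b(2) assms(2) even_level_plus_time[of "2 * n" w] by (simp_all add: s_def c_def)
  moreover have "c + height s = 0"
    using level_s[of "2 * g"] b(4) len_s by (simp add: level_length algebra_simps)
  moreover have "\<forall>t\<in>{1..2 * g - 1}. 0 < c + level s t \<and> c + level s t < c"
  proof
    fix t assume t: "t \<in> {1..2 * g - 1}"
    then have "2 * b + t \<in> {1..2 * (b + g) - 1}" "2 * b + t \<in> {2 * b + 1..2 * n - 1}"
      using b(2) by auto
    then show "0 < c + level s t \<and> c + level s t < c"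
      using level_s[of t] t pos below by (auto simp: c_def)
  qed
  ultimately have c: "c = 2 * int g" and s: "s = replicate (2 * g) False"
    using forced_descent[OF assms(1)] by blast+
  have "w = take (2 * b) w @ s @ drop (2 * (b + g)) w"
    unfolding s_def by (metis append_take_drop_id drop_drop add.commute distrib_left)
  moreover have "take (2 * b) w \<in> pos_walks (2 * b) 0 (2 * int g)"
    using take_in_pos_walks[of "2 * b" w] pos b(2,3) assms c by (auto simp: c_def)
  moreover have "drop (2 * (b + g)) w \<in> below_walks (2 * (n - g - b)) (2 * int g)"
  proof -
    have "2 * n - 2 * (b + g) = 2 * (n - g - b)" "0 < g"
      using assms(1) by auto
    then show ?thesis
      using drop_in_below_walks[of "2 * (b + g)" w] below b(2,4) assms(2) c
      by (auto simp: c_def level_length)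
  qed
  ultimately have "w \<in> descent_walks g n b"
    unfolding descent_walks_def s by force
  then show ?thesis
    using that b(1,2) by blast
qed

lemma up_mab_walks_eq_UN_descent_walks:
  assumes "g = 1 \<or> g = 2"
  shows "{w. length w = 2 * n \<and> mab_walk g n w \<and> 0 < level w 1} =
    (\<Union>k\<in>{1..n - g - 1}. descent_walks g n k)"
proof (intro equalityI subsetI)
  fix w assume "w \<in> {w. length w = 2 * n \<and> mab_walk g n w \<and> 0 < level w 1}"
  then obtain k where "1 \<le> k" "k + g < n" "w \<in> descent_walks g n k"
    using up_mab_walk_in_descent_walks[OF assms] by blast
  then show "w \<in> (\<Union>k\<in>{1..n - g - 1}. descent_walks g n k)"
    by auto
next
  fix w assume "w \<in> (\<Union>k\<in>{1..n - g - 1}. descent_walks g n k)"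
  then obtain k where "1 \<le> k" "k + g < n" "w \<in> descent_walks g n k"
    by auto
  moreover have "1 \<le> g"
    using assms by auto
  ultimately show "w \<in> {w. length w = 2 * n \<and> mab_walk g n w \<and> 0 < level w 1}"
    using descent_walk_mab_walk(1-3) by blast
qed

lemma Mo_eq_sum_card_pos_walks:
  assumes "g = 1 \<or> g = 2" "1 \<le> n"
  shows "Mo g n = 2 * (\<Sum>k=1..n - g - 1.
    card (pos_walks (2 * k) 0 (2 * int g)) * card (pos_walks (2 * (n - g - k)) 0 (2 * int g)))"
proof -
  have fin: "finite (descent_walks g n k)" for k
    by (simp add: descent_walks_def finite_pos_walks below_walks_def finite_walks_length)
  have disj: "descent_walks g n i \<inter> descent_walks g n j = {}"
    if "i \<in> {1..n - g - 1}" "j \<in> {1..n - g - 1}" "i \<noteq> j" for i j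
  proof -
    have "1 \<le> g" "1 \<le> i" "i + g < n" "1 \<le> j" "j + g < n"
      using that assms(1) by auto
    then show ?thesis
      using that descent_walk_mab_walk(4)[of g i n] descent_walk_mab_walk(4)[of g j n]
      by (metis add_right_cancel disjoint_iff)
  qed
  have "card (\<Union>k\<in>{1..n - g - 1}. descent_walks g n k) =
      (\<Sum>k=1..n - g - 1. card (descent_walks g n k))"
    by (rule card_UN_disjoint) (use fin disj in auto)
  then show ?thesis
    by (simp only: Mo_eq_card_mab_walks card_mab_walks_eq_twice_up[OF assms(2)]
        up_mab_walks_eq_UN_descent_walks[OF assms(1)] card_descent_walks)
qed

lemma Mo_eq_sum_choose:
  assumes "g = 1 \<or> g = 2" "1 \<le> n"
  shows "real (Mo g n) = 2 * (\<Sum>k=1..n - g - 1. real (g\<^sup>2) / (real k * real (n - g - k))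
    * real (2 * k choose (k + g)) * real (2 * (n - g - k) choose (n - k)))"
proof -
  have "real (card (pos_walks (2 * k) 0 (2 * int g)) * card (pos_walks (2 * (n - g - k)) 0 (2 * int g)))
      = real (g\<^sup>2) / (real k * real (n - g - k))
        * real (2 * k choose (k + g)) * real (2 * (n - g - k) choose (n - k))"
    if "k \<in> {1..n - g - 1}" for k
  proof -
    have "1 \<le> g" "1 \<le> k" "1 \<le> n - g - k" and n_k: "n - g - k + g = n - k"
      using that assms(1) by auto
    then show ?thesis
      unfolding of_nat_mult card_pos_walks_from_0[OF \<open>1 \<le> k\<close> \<open>1 \<le> g\<close>]
        card_pos_walks_from_0[OF \<open>1 \<le> n - g - k\<close> \<open>1 \<le> g\<close>] n_k
      by (simp add: power2_eq_square)
  qed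
  then have "(\<Sum>k=1..n - g - 1. real (card (pos_walks (2 * k) 0 (2 * int g))
        * card (pos_walks (2 * (n - g - k)) 0 (2 * int g))))
      = (\<Sum>k=1..n - g - 1. real (g\<^sup>2) / (real k * real (n - g - k))
        * real (2 * k choose (k + g)) * real (2 * (n - g - k) choose (n - k)))"
    by (rule sum.cong[OF refl])
  then show ?thesis
    by (simp only: Mo_eq_sum_card_pos_walks[OF assms] of_nat_mult of_nat_sum)
qed

section \<open>The binomial sums\<close>

lemma sum_choose_mult_choose_diff:
  "(\<Sum>j=d..K. real (K choose j) * real (K choose (j - d))) = real (2 * K choose (K + d))"
proof -
  have "2 * K choose (K + d) = (\<Sum>j\<le>K + d. (K choose j) * (K choose (K + d - j)))"
    using vandermonde[of K K "K + d"] by (simp add: mult_2)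
  also have "\<dots> = (\<Sum>j=d..K. (K choose j) * (K choose (j - d)))"
  proof (rule sum.mono_neutral_cong_right)
    show "\<forall>j\<in>{..K + d} - {d..K}. (K choose j) * (K choose (K + d - j)) = 0"
      by (auto simp: binomial_eq_0)
    show "(K choose j) * (K choose (K + d - j)) = (K choose j) * (K choose (j - d))"
      if "j \<in> {d..K}" for j
    proof -
      have "j - d \<le> K" "K - (j - d) = K + d - j"
        using that by auto
      then show ?thesis
        using binomial_symmetric[of "j - d" K] by simp
    qed
  qed auto
  finally have "2 * K choose (K + d) = (\<Sum>j=d..K. (K choose j) * (K choose (j - d)))" .
  then have "real (2 * K choose (K + d)) = real (\<Sum>j=d..K. (K choose j) * (K choose (j - d)))"
    by (rule arg_cong)
  then show ?thesis
    unfolding of_nat_sum of_nat_mult by (rule sym)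
qed

lemma double_sum_choose:
  fixes c :: real
  assumes "d \<le> i"
  shows "(\<Sum>l=d..K. \<Sum>m=l + d..i + l - d. c * real (K choose l) * real (K choose (l - d))
      * real ((i - d) choose (m - l)) * real ((i - d) choose (m - l - d)))
    = c * real (2 * K choose (K + d)) * real (2 * (i - d) choose i)"
proof -
  obtain J where i: "i = J + d"
    using assms by (metis le_add_diff_inverse2)
  have inner: "(\<Sum>m=l + d..l + J. real (J choose (m - l)) * real (J choose (m - l - d)))
      = real (2 * J choose (J + d))" for l
  proof -
    let ?f = "\<lambda>m. real (J choose (m - l)) * real (J choose (m - l - d))"
    have "{l + d..l + J} = {d + l..J + l}"
      by (simp add: add.commute)
    then have "sum ?f {l + d..l + J} = (\<Sum>j=d..J. ?f (j + l))"
      by (simp only: sum.shift_bounds_cl_nat_ivl)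
    then show ?thesis
      by (simp add: sum_choose_mult_choose_diff)
  qed
  have "i + l - d = l + J" "i - d = J" for l
    by (simp_all add: i)
  then have "(\<Sum>l=d..K. \<Sum>m=l + d..i + l - d. c * real (K choose l) * real (K choose (l - d))
      * real ((i - d) choose (m - l)) * real ((i - d) choose (m - l - d)))
    = (\<Sum>l=d..K. c * real (K choose l) * real (K choose (l - d))
      * (\<Sum>m=l + d..l + J. real (J choose (m - l)) * real (J choose (m - l - d))))"
    by (simp only: sum_distrib_left mult.assoc)
  also have "\<dots> = (\<Sum>l=d..K. c * real (K choose l) * real (K choose (l - d)) * real (2 * J choose (J + d)))"
    by (simp only: inner)
  also have "\<dots> = c * real (2 * J choose (J + d)) * (\<Sum>l=d..K. real (K choose l) * real (K choose (l - d)))"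
    by (simp add: sum_distrib_left ac_simps)
  finally show ?thesis
    by (simp add: sum_choose_mult_choose_diff i ac_simps)
qed

lemma triple_sum_choose:
  fixes c :: real
  assumes "1 \<le> d"
  shows "(\<Sum>i=d + 1..n - d. \<Sum>l1=d..n - i. \<Sum>m=l1 + d..i + l1 - d.
      c / (real (i - d) * real (n - i)) * real ((n - i) choose l1) * real ((n - i) choose (l1 - d))
      * real ((i - d) choose (m - l1)) * real ((i - d) choose (m - l1 - d)))
    = (\<Sum>k=1..n - d - 1. c / (real k * real (n - d - k))
      * real (2 * k choose (k + d)) * real (2 * (n - d - k) choose (n - k)))"
    (is "?triple = (\<Sum>k=1..n - d - 1. ?f k)")
proof -
  have "?triple = (\<Sum>i=d + 1..n - d. c / (real (i - d) * real (n - i))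
      * real (2 * (n - i) choose (n - i + d)) * real (2 * (i - d) choose i))"
    by (intro sum.cong refl double_sum_choose) simp
  also have "\<dots> = (\<Sum>k=1..n - 2 * d. ?f k)"
  proof (cases "2 * d \<le> n")
    case True
    then have "{d + 1..n - d} = {1 + d..(n - 2 * d) + d}"
      by auto
    then show ?thesis
    proof (simp only: sum.shift_bounds_cl_nat_ivl, intro sum.cong refl)
      fix k assume "k \<in> {1..n - 2 * d}"
      then have "k + d - d = k" "n - (k + d) = n - d - k" "n - d - k + d = n - k"
        by auto
      then show "c / (real (k + d - d) * real (n - (k + d)))
          * real (2 * (n - (k + d)) choose (n - (k + d) + d)) * real (2 * (k + d - d) choose (k + d))
        = ?f k"
        by (simp only:) (simp add: ac_simps)
    qed
  qed auto
  also have "\<dots> = (\<Sum>k=1..n - d - 1. ?f k)"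
    using assms by (intro sum.mono_neutral_left) (auto simp: binomial_eq_0)
  finally show ?thesis .
qed

theorem mainTheorem6:
  fixes n :: nat
  assumes "n \<ge> 2"
  shows "(real (Mo 1 n) = 2 * (\<Sum>i=2..n-1. \<Sum>l1=1..n-i. \<Sum>m=l1+1..i+l1-1.
            1 / (real (i-1) * real (n-i)) * real ((n-i) choose l1) * real ((n-i) choose (l1-1))
            * real ((i-1) choose (m-l1)) * real ((i-1) choose (m-l1-1)))) \<and>
         (real (Mo 2 n) = 2 * (\<Sum>i=3..n-2. \<Sum>l1=2..n-i. \<Sum>m=l1+2..i+l1-2.
            4 / (real (i-2) * real (n-i)) * real ((n-i) choose l1) * real ((n-i) choose (l1-2))
            * real ((i-2) choose (m-l1)) * real ((i-2) choose (m-l1-2))))"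
proof -
  have "1 \<le> n" and bounds: "(1::nat) + 1 = 2" "(2::nat) + 1 = 3"
    using assms by simp_all
  then show ?thesis
    using Mo_eq_sum_choose[of 1 n] Mo_eq_sum_choose[of 2 n]
      triple_sum_choose[of 1 1 n, unfolded bounds] triple_sum_choose[of 2 4 n, unfolded bounds]
    by simp
qed

end
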